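(* Let $\mathcal H$ be a class of functions $\mathcal X\to[-1,1]$ and $\mathcal F$ a class of functions $\mathcal Z\to[-1,1]$, and let samples $(y_i,x_i,z_i)_{i=1}^n$ with $y_i\in[-1,1]$ be given. Assume access to $\mathrm{Oracle}_{\mathcal F}(z_{1:n},u_{1:n})\in\arg\min_{f\in\mathcal F}\frac1n\sum_i(u_i-f(z_i))^2$ and $\mathrm{Oracle}_{\mathcal H}(x_{1:n},v_{1:n},w_{1:n})\in\arg\max_{h\in\mathcal H}\frac1n\sum_iw_i\Pr_{\xi_i\sim\mathrm{Bernoulli}((1+h(x_i))/2)}[v_i=\xi_i]$. Consider the algorithm that for $t=1,\dots,T$ sets $$u_i^t=\tfrac12\Big(y_i-\tfrac1{t-1}\textstyle\sum_{\tau=1}^{t-1}h_\tau(x_i)\Big),\quad f_t=\mathrm{Oracle}_{\mathcal F}(z_{1:n},u^t_{1:n}),$$ $$v_i^t=\mathbf 1\{f_t(z_i)>0\},\quad w_i^t=|f_t(z_i)|,\quad h_t=\mathrm{Oracle}_{\mathcal H}(x_{1:n},v^t_{1:n},w^t_{1:n})$$ (for $t=1$ the empty average is interpreted as $0$). Suppose the set $A=\{(f(z_1),\dots,f(z_n)):f\in\mathcal F\}$ is convex. Then the ensemble $\bar h=\frac1T\sum_{t=1}^Th_t$ is an $\frac{8(\log T+1)}{T}$-approximate solution to the minimax problem $\min_{h\in\mathcal H}\sup_{f\in\mathcal F}\Psi_n(h,f)-\|f\|_{2,n}^2$, i.e. $\sup_{f\in\mathcal F}\big(\Psi_n(\bar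 h,f)-\|f\|_{2,n}^2\big)\le\inf_{h\in\mathcal H}\sup_{f\in\mathcal F}\big(\Psi_n(h,f)-\|f\|_{2,n}^2\big)+\frac{8(\log T+1)}{T}$.
   Context: $\Psi_n(h,f)=\frac1n\sum_i(y_i-h(x_i))f(z_i)$ and $\|f\|_{2,n}^2=\frac1n\sum_if(z_i)^2$. *)

theory Defs
  imports "HOL-Analysis.Analysis"
begin

text \<open>Samples are indexed by a finite type 'n, so n = CARD('n) \<ge> 1.\<close>

definition Psi_n :: "('n::finite \<Rightarrow> real) \<Rightarrow> ('n \<Rightarrow> 'x) \<Rightarrow> ('n \<Rightarrow> 'z)
    \<Rightarrow> ('x \<Rightarrow> real) \<Rightarrow> ('z \<Rightarrow> real) \<Rightarrow> real" where
  "Psi_n y x z h f = (1 / real CARD('n)) * (\<Sum>i\<in>UNIV. (y i - h (x i)) * f (z i))"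

definition norm2n_sq :: "('n::finite \<Rightarrow> 'z) \<Rightarrow> ('z \<Rightarrow> real) \<Rightarrow> real" where
  "norm2n_sq z f = (1 / real CARD('n)) * (\<Sum>i\<in>UNIV. (f (z i))^2)"

text \<open>Pr over xi ~ Bernoulli(p) on {0,1} that v = xi, with v encoded as a bool (True = 1).\<close>
definition bern_agree :: "real \<Rightarrow> bool \<Rightarrow> real" where
  "bern_agree p v = (if v then p else 1 - p)"

definition oracleH_obj :: "('n::finite \<Rightarrow> 'x) \<Rightarrow> ('n \<Rightarrow> bool) \<Rightarrow> ('n \<Rightarrow> real)
    \<Rightarrow> ('x \<Rightarrow> real) \<Rightarrow> real" where
  "oracleH_obj x v w h = (1 / real CARD('n)) *
     (\<Sum>i\<in>UNIV. w i * bern_agree ((1 + h (x i)) / 2) (v i))"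

definition oracleF_obj :: "('n::finite \<Rightarrow> 'z) \<Rightarrow> ('n \<Rightarrow> real) \<Rightarrow> ('z \<Rightarrow> real) \<Rightarrow> real" where
  "oracleF_obj z u f = (1 / real CARD('n)) * (\<Sum>i\<in>UNIV. (u i - f (z i))^2)"

definition prev_avg :: "(nat \<Rightarrow> 'x \<Rightarrow> real) \<Rightarrow> nat \<Rightarrow> 'x \<Rightarrow> real" where
  "prev_avg hs t a = (if t \<le> 1 then 0 else (1 / real (t - 1)) * (\<Sum>\<tau>=1..t-1. hs \<tau> a))"

end

(*
  Write c = (y i - h (x i))_i and w = (f (z i))_i. Then n (Psi_n(h,f) - ||f||_{2,n}^2) is the payoff
  <c, w> - |w|^2, which is linear in c and strongly concave in w.  Oracle_F maximises the payoff
  against the running average of the past residuals, so the f-player follows the leader; strong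
  concavity makes consecutive leaders close, and its regret over T rounds is at most
  8 n (ln T + 1).  With labels sign (f_t) and weights |f_t|, Oracle_H minimises the payoff against
  f_t, so the h-player best-responds.  Averaging over the rounds, the payoff of the ensemble against
  any f is at most the payoff of any h against the average of the f_t, which lies in F by convexity
  of A, plus regret / T.
*)

theory Submission
  imports Defs
begin

section \<open>Follow the leader for a strongly concave quadratic payoff\<close>

definition payoff :: "'a::real_inner \<Rightarrow> 'a \<Rightarrow> real" where
  "payoff c w = inner c w - (norm w)\<^sup>2"

lemma payoff_le_norm_sq: "payoff c w \<le> (norm c)\<^sup>2 / 4"
proof -
  have "0 \<le> (norm (w - c /\<^sub>R 2))\<^sup>2" by simp
  then show ?thesis
    by (simp add: payoff_def power2_norm_eq_inner inner_diff_left inner_diff_right inner_commute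
        field_simps)
qed

lemma payoff_diff: "payoff c v - payoff c a = inner (c - v - a) (v - a)"
  by (simp add: payoff_def power2_norm_eq_inner inner_diff_left inner_diff_right inner_commute)

lemma payoff_diff_le:
  assumes "norm c \<le> 2 * r" "norm v \<le> r" "norm a \<le> r"
  shows "payoff c v - payoff c a \<le> 4 * r\<^sup>2"
proof -
  have r: "r \<ge> 0" using assms(2) norm_ge_zero[of v] by linarith
  have "(norm c)\<^sup>2 \<le> (2 * r)\<^sup>2" by (rule power_mono[OF assms(1)]) simp
  moreover have "norm c * norm a \<le> 2 * r * r" using assms r by (intro mult_mono) auto
  moreover have "(norm a)\<^sup>2 \<le> r\<^sup>2" using assms(3) by (simp add: power_mono)
  ultimately show ?thesis
    using payoff_le_norm_sq[of c v] norm_cauchy_schwarz[of "-c" a]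
    by (simp add: payoff_def power2_eq_square)
qed

lemma sum_payoff: "(\<Sum>t\<in>I. payoff (d t) w) = inner (\<Sum>t\<in>I. d t) w - real (card I) * (norm w)\<^sup>2"
  by (cases "finite I") (simp_all add: payoff_def sum_subtractf inner_sum_left)

lemma sum_payoff_eq_card_mult_payoff_mean:
  "(\<Sum>t\<in>I. payoff (d t) w) = real (card I) * payoff ((1 / real (card I)) *\<^sub>R (\<Sum>t\<in>I. d t)) w"
  unfolding sum_payoff by (cases "card I = 0") (auto simp: payoff_def card_eq_0_iff field_simps)

lemma sum_payoff_le_card_mult_payoff_mean:
  assumes "finite I"
  shows "(\<Sum>t\<in>I. payoff c (a t)) \<le> real (card I) * payoff c ((1 / real (card I)) *\<^sub>R (\<Sum>t\<in>I. a t))"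
proof (cases "I = {}")
  case False
  define k where "k = real (card I)"
  have k: "k > 0" using assms False by (simp add: k_def card_gt_0_iff)
  have "(norm (\<Sum>t\<in>I. a t))\<^sup>2 \<le> (\<Sum>t\<in>I. norm (a t))\<^sup>2"
    by (intro power_mono norm_sum) simp
  also have "\<dots> \<le> (\<Sum>t\<in>I. (norm (a t))\<^sup>2) * k"
    unfolding k_def by (rule sum_squared_le_sum_of_squares)
  finally have "(norm (\<Sum>t\<in>I. a t))\<^sup>2 / k \<le> (\<Sum>t\<in>I. (norm (a t))\<^sup>2)"
    using k by (simp add: divide_le_eq)
  moreover have "k * payoff c ((1 / k) *\<^sub>R (\<Sum>t\<in>I. a t))
      = inner c (\<Sum>t\<in>I. a t) - (norm (\<Sum>t\<in>I. a t))\<^sup>2 / k"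
    using k by (simp add: payoff_def power2_eq_square field_simps)
  ultimately show ?thesis
    by (simp add: payoff_def sum_subtractf inner_sum_right flip: k_def)
qed simp

lemma quadratic_growth_at_max:
  fixes C a v :: "'a::real_inner"
  assumes "convex W" "a \<in> W" "v \<in> W" "m \<ge> 0"
    and max: "\<forall>w\<in>W. inner C w - m * (norm w)\<^sup>2 \<le> inner C a - m * (norm a)\<^sup>2"
  shows "inner C v - m * (norm v)\<^sup>2 \<le> inner C a - m * (norm a)\<^sup>2 - m * (norm (v - a))\<^sup>2"
proof -
  \<comment> \<open>P is the slope at s = 0 of the objective along a + s (v - a); maximality of a forces P \<le> 0\<close>
  define P where "P = inner (C - (2 * m) *\<^sub>R a) (v - a)"
  define K where "K = m * (norm (v - a))\<^sup>2"
  have K: "K \<ge> 0" using assms(4) by (simp add: K_def)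
  have expand: "inner C (a + s *\<^sub>R (v - a)) - m * (norm (a + s *\<^sub>R (v - a)))\<^sup>2
      = inner C a - m * (norm a)\<^sup>2 + s * P - s\<^sup>2 * K" for s
    unfolding P_def K_def power2_norm_eq_inner
    by (simp add: inner_diff_left inner_diff_right inner_add_left inner_add_right inner_commute
        power2_eq_square algebra_simps)
  have P_le: "P \<le> s * K" if "0 < s" "s \<le> 1" for s
  proof -
    have "a + s *\<^sub>R (v - a) = (1 - s) *\<^sub>R a + s *\<^sub>R v" by (simp add: algebra_simps)
    then have "a + s *\<^sub>R (v - a) \<in> W" using convexD[OF assms(1-3)] that by simp
    then have "s * P - s\<^sup>2 * K \<le> 0" using max expand[of s] by fastforce
    then show ?thesis using that by (simp add: power2_eq_square algebra_simps mult_le_cancel_left_pos)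
  qed
  have "P \<le> 0"
  proof (rule field_le_epsilon)
    fix e :: real assume "e > 0"
    define s where "s = min 1 (e / (K + 1))"
    have s: "0 < s" "s \<le> 1" using \<open>e > 0\<close> K by (auto simp: s_def)
    have "s * K \<le> e / (K + 1) * K" using K by (intro mult_right_mono) (auto simp: s_def)
    also have "\<dots> \<le> e" using K \<open>e > 0\<close> by (simp add: field_simps)
    finally show "P \<le> 0 + e" using P_le[OF s] by simp
  qed
  then show ?thesis using expand[of 1] by (simp add: K_def)
qed

lemma be_the_leader_step:
  fixes C c a v :: "'a::real_inner"
  assumes "convex W" "a \<in> W" "v \<in> W" "m > 0"
    and max: "\<forall>w\<in>W. inner C w - m * (norm w)\<^sup>2 \<le> inner C a - m * (norm a)\<^sup>2"
    and bounds: "norm c \<le> 2 * r" "\<forall>w\<in>W. norm w \<le> r"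
  shows "inner C v - m * (norm v)\<^sup>2 + payoff c v \<le> inner C a - m * (norm a)\<^sup>2 + payoff c a + 4 * r\<^sup>2 / m"
proof -
  define e where "e = norm (c - v - a)"
  define q where "q = norm (v - a)"
  have "e \<le> norm c + norm v + norm a" unfolding e_def by norm
  moreover have "norm v \<le> r" "norm a \<le> r" using bounds(2) assms(2,3) by auto
  ultimately have "e \<le> 4 * r" using bounds(1) by linarith
  then have "e\<^sup>2 \<le> (4 * r)\<^sup>2" by (rule power_mono) (simp add: e_def)
  then have e_sq: "e\<^sup>2 \<le> 16 * r\<^sup>2" by simp
  have "payoff c v - payoff c a \<le> e * q"
    unfolding payoff_diff e_def q_def by (rule norm_cauchy_schwarz)
  also have "\<dots> \<le> m * q\<^sup>2 + e\<^sup>2 / (4 * m)"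
  proof -
    have "0 \<le> (2 * m * q - e)\<^sup>2" by simp
    then show ?thesis using \<open>m > 0\<close> by (simp add: field_simps power2_eq_square)
  qed
  also have "\<dots> \<le> m * q\<^sup>2 + 4 * r\<^sup>2 / m"
    using e_sq \<open>m > 0\<close> by (simp add: field_simps)
  finally show ?thesis
    using quadratic_growth_at_max[OF assms(1-3) less_imp_le[OF \<open>m > 0\<close>] max]
    unfolding q_def by linarith
qed

lemma follow_the_leader_regret_harm:
  fixes d a :: "nat \<Rightarrow> 'a::real_inner"
  assumes "convex W" "T \<ge> 1" "v \<in> W"
    and W_bounded: "\<forall>w\<in>W. norm w \<le> r"
    and d_bounded: "\<forall>t\<in>{1..T}. norm (d t) \<le> 2 * r"
    and a_in_W: "\<forall>t\<in>{1..T}. a t \<in> W"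
    and leader: "\<forall>t\<in>{2..T}. \<forall>w\<in>W.
        (\<Sum>\<tau>=1..t-1. payoff (d \<tau>) w) \<le> (\<Sum>\<tau>=1..t-1. payoff (d \<tau>) (a t))"
  shows "(\<Sum>t=1..T. payoff (d t) v) \<le> (\<Sum>t=1..T. payoff (d t) (a t)) + 4 * r\<^sup>2 * (1 + harm (T - 1))"
  using assms(2,3) d_bounded a_in_W leader
proof (induction T arbitrary: v rule: nat_induct_at_least)
  case base
  then show ?case using payoff_diff_le[of "d 1" r v "a 1"] W_bounded by (simp add: harm_def)
next
  case (Suc m)
  let ?C = "\<Sum>t=1..m. d t" and ?a = "a (Suc m)"
  have m: "real m > 0" using Suc.hyps by simp
  have cumulative: "(\<Sum>t=1..m. payoff (d t) w) = inner ?C w - m * (norm w)\<^sup>2" for w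
    by (simp add: sum_payoff)
  have "\<forall>w\<in>W. (\<Sum>t=1..m. payoff (d t) w) \<le> (\<Sum>t=1..m. payoff (d t) ?a)"
    using Suc.prems(4)[rule_format, of "Suc m"] Suc.hyps by simp
  then have "(\<Sum>t=1..m. payoff (d t) v) + payoff (d (Suc m)) v
      \<le> (\<Sum>t=1..m. payoff (d t) ?a) + payoff (d (Suc m)) ?a + 4 * r\<^sup>2 / m"
    unfolding cumulative
    by (intro be_the_leader_step[OF \<open>convex W\<close> _ \<open>v \<in> W\<close> m]) (use Suc.prems W_bounded in auto)
  moreover have "(\<Sum>t=1..m. payoff (d t) ?a)
      \<le> (\<Sum>t=1..m. payoff (d t) (a t)) + 4 * r\<^sup>2 * (1 + harm (m - 1))"
    using Suc.prems by (intro Suc.IH) auto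
  moreover have "harm m = harm (m - 1) + 1 / real m"
    using Suc.hyps harm_Suc[of "m - 1"] by (simp add: inverse_eq_divide)
  ultimately show ?case by (simp add: algebra_simps add_divide_distrib)
qed

lemma harm_le_one_plus_ln: "n \<ge> 1 \<Longrightarrow> harm n \<le> 1 + ln (real n)"
  using euler_mascheroni_sequence_decreasing[of 1 n] by (simp add: harm_def)

lemma follow_the_leader_regret:
  fixes d a :: "nat \<Rightarrow> 'a::real_inner"
  assumes "convex W" "T \<ge> 1" "v \<in> W"
    and "\<forall>w\<in>W. norm w \<le> r"
    and "\<forall>t\<in>{1..T}. norm (d t) \<le> 2 * r"
    and "\<forall>t\<in>{1..T}. a t \<in> W"
    and "\<forall>t\<in>{2..T}. \<forall>w\<in>W.
        (\<Sum>\<tau>=1..t-1. payoff (d \<tau>) w) \<le> (\<Sum>\<tau>=1..t-1. payoff (d \<tau>) (a t))"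
  shows "(\<Sum>t=1..T. payoff (d t) v) \<le> (\<Sum>t=1..T. payoff (d t) (a t)) + 8 * r\<^sup>2 * (ln (real T) + 1)"
proof -
  have "harm (T - 1) \<le> (harm T :: real)" by (rule harm_mono) simp
  also have "\<dots> \<le> 1 + ln (real T)" using assms(2) by (rule harm_le_one_plus_ln)
  finally have "harm (T - 1) \<le> 1 + ln (real T)" .
  moreover have "ln (real T) \<ge> 0" using assms(2) by simp
  ultimately have "1 + harm (T - 1) \<le> 2 * (ln (real T) + 1)" by argo
  from mult_left_mono[OF this, of "4 * r\<^sup>2"]
  have "4 * r\<^sup>2 * (1 + harm (T - 1)) \<le> 8 * r\<^sup>2 * (ln (real T) + 1)"
    by (simp add: algebra_simps)
  then show ?thesis using follow_the_leader_regret_harm[OF assms] by linarith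
qed

lemma payoff_mean_le_of_regret:
  fixes d a :: "nat \<Rightarrow> 'a::real_inner"
  assumes "finite I" "I \<noteq> {}"
    and regret: "(\<Sum>t\<in>I. payoff (d t) v) \<le> (\<Sum>t\<in>I. payoff (d t) (a t)) + R"
    and best_response: "\<forall>t\<in>I. payoff (d t) (a t) \<le> payoff c (a t)"
  shows "payoff ((1 / real (card I)) *\<^sub>R (\<Sum>t\<in>I. d t)) v
    \<le> payoff c ((1 / real (card I)) *\<^sub>R (\<Sum>t\<in>I. a t)) + R / real (card I)"
proof -
  have k: "real (card I) > 0" using assms(1,2) by (simp add: card_gt_0_iff)
  have "real (card I) * payoff ((1 / real (card I)) *\<^sub>R (\<Sum>t\<in>I. d t)) v
      = (\<Sum>t\<in>I. payoff (d t) v)"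
    by (rule sum_payoff_eq_card_mult_payoff_mean[symmetric])
  also have "\<dots> \<le> (\<Sum>t\<in>I. payoff c (a t)) + R"
    using regret sum_mono[of I "\<lambda>t. payoff (d t) (a t)"] best_response by fastforce
  also have "\<dots> \<le> real (card I) * payoff c ((1 / real (card I)) *\<^sub>R (\<Sum>t\<in>I. a t)) + R"
    using sum_payoff_le_card_mult_payoff_mean[OF assms(1)] by simp
  finally show ?thesis using k by (simp add: field_simps)
qed

section \<open>The boosting run\<close>

lemma power2_norm_vec: "(norm v)\<^sup>2 = (\<Sum>i\<in>UNIV. (v $ i)\<^sup>2)"
  by (simp add: norm_vec_def L2_set_def sum_nonneg)

lemma norm_le_sqrt_card:
  fixes v :: "real ^ 'n"
  assumes "\<forall>i. \<bar>v $ i\<bar> \<le> b"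
  shows "norm v \<le> b * sqrt (real CARD('n))"
proof -
  have b: "b \<ge> 0" using assms abs_ge_zero[of "v $ undefined"] by (meson order.trans)
  have "(norm v)\<^sup>2 = (\<Sum>i\<in>UNIV. (v $ i)\<^sup>2)" by (rule power2_norm_vec)
  also have "\<dots> \<le> (\<Sum>i\<in>(UNIV :: 'n set). b\<^sup>2)"
    using assms b by (intro sum_mono) (simp add: power2_le_iff_abs_le)
  also have "\<dots> = (b * sqrt (real CARD('n)))\<^sup>2" by (simp add: power_mult_distrib)
  finally show ?thesis by (rule power2_le_imp_le) (simp add: b)
qed

lemma payoff_vec_lambda: "payoff (\<chi> i. p i) (\<chi> i. q i) = (\<Sum>i\<in>UNIV. p i * q i - (q i)\<^sup>2)"
  by (simp add: payoff_def inner_vec_def power2_norm_vec sum_subtractf)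

definition residual :: "('n::finite \<Rightarrow> real) \<Rightarrow> ('n \<Rightarrow> 'x) \<Rightarrow> ('x \<Rightarrow> real) \<Rightarrow> real ^ 'n" where
  "residual y x h = (\<chi> i. y i - h (x i))"

definition sample :: "('n::finite \<Rightarrow> 'z) \<Rightarrow> ('z \<Rightarrow> real) \<Rightarrow> real ^ 'n" where
  "sample z f = (\<chi> i. f (z i))"

lemma Psi_n_minus_norm2n_sq:
  fixes y :: "'n::finite \<Rightarrow> real"
  shows "Psi_n y x z h f - norm2n_sq z f = payoff (residual y x h) (sample z f) / real CARD('n)"
  by (simp add: Psi_n_def norm2n_sq_def residual_def sample_def payoff_vec_lambda
      sum_subtractf diff_divide_distrib)

lemma residual_mean:
  assumes "finite I" "I \<noteq> {}"
  shows "residual y x (\<lambda>a. (1 / real (card I)) * (\<Sum>t\<in>I. g t a))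
    = (1 / real (card I)) *\<^sub>R (\<Sum>t\<in>I. residual y x (g t))"
  using assms by (simp add: residual_def vec_eq_iff sum_subtractf field_simps)

lemma oracleF_obj_le_iff:
  fixes z :: "'n::finite \<Rightarrow> 'z"
  shows "oracleF_obj z (\<lambda>i. c i / 2) f \<le> oracleF_obj z (\<lambda>i. c i / 2) g
    \<longleftrightarrow> payoff (\<chi> i. c i) (sample z g) \<le> payoff (\<chi> i. c i) (sample z f)"
proof -
  have square: "(u / 2 - w)\<^sup>2 = u\<^sup>2 / 4 - (u * w - w\<^sup>2)" for u w :: real
    by (simp add: power2_eq_square field_simps)
  have "oracleF_obj z (\<lambda>i. c i / 2) f
      = (1 / real CARD('n)) * ((\<Sum>i\<in>UNIV. (c i)\<^sup>2 / 4) - payoff (\<chi> i. c i) (sample z f))" for f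
    by (simp add: oracleF_obj_def sample_def payoff_vec_lambda square sum_subtractf)
  then show ?thesis by (simp add: divide_le_cancel)
qed

lemma oracleH_obj_le_iff:
  fixes x :: "'n::finite \<Rightarrow> 'x"
  shows "oracleH_obj x (\<lambda>i. f (z i) > 0) (\<lambda>i. \<bar>f (z i)\<bar>) h
      \<le> oracleH_obj x (\<lambda>i. f (z i) > 0) (\<lambda>i. \<bar>f (z i)\<bar>) h'
    \<longleftrightarrow> payoff (residual y x h') (sample z f) \<le> payoff (residual y x h) (sample z f)"
proof -
  have agree: "\<bar>w\<bar> * bern_agree ((1 + p) / 2) (w > 0) = \<bar>w\<bar> / 2 + (w * p) / 2" for w p :: real
    by (simp add: bern_agree_def field_simps)
  have "oracleH_obj x (\<lambda>i. f (z i) > 0) (\<lambda>i. \<bar>f (z i)\<bar>) h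
      = (1 / real CARD('n))
        * ((\<Sum>i\<in>UNIV. \<bar>f (z i)\<bar> / 2) + (\<Sum>i\<in>UNIV. f (z i) * h (x i)) / 2)" for h
    by (simp add: oracleH_obj_def agree sum.distrib sum_divide_distrib)
  moreover have "payoff (residual y x h) (sample z f)
      = (\<Sum>i\<in>UNIV. y i * f (z i) - (f (z i))\<^sup>2) - (\<Sum>i\<in>UNIV. f (z i) * h (x i))" for h
    unfolding residual_def sample_def payoff_vec_lambda sum_subtractf[symmetric]
    by (rule sum.cong) (simp_all add: algebra_simps)
  ultimately show ?thesis by (simp add: mult_le_cancel_left_pos divide_le_cancel)
qed

lemma oracleF_is_leader:
  fixes y :: "'n::finite \<Rightarrow> real"
  assumes "t \<ge> 2"
    and opt: "\<forall>f\<in>F. oracleF_obj z (\<lambda>i. (y i - prev_avg hs t (x i)) / 2) (fs t)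
               \<le> oracleF_obj z (\<lambda>i. (y i - prev_avg hs t (x i)) / 2) f"
    and "f \<in> F"
  shows "(\<Sum>\<tau>=1..t-1. payoff (residual y x (hs \<tau>)) (sample z f))
    \<le> (\<Sum>\<tau>=1..t-1. payoff (residual y x (hs \<tau>)) (sample z (fs t)))"
proof -
  have "prev_avg hs t = (\<lambda>a. (1 / real (card {1..t-1})) * (\<Sum>\<tau>\<in>{1..t-1}. hs \<tau> a))"
    using \<open>t \<ge> 2\<close> by (auto simp: prev_avg_def fun_eq_iff)
  then have mean: "residual y x (prev_avg hs t)
      = (1 / real (card {1..t-1})) *\<^sub>R (\<Sum>\<tau>=1..t-1. residual y x (hs \<tau>))"
    using \<open>t \<ge> 2\<close> by (simp only:) (rule residual_mean, auto)
  have "payoff (residual y x (prev_avg hs t)) (sample z f)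
      \<le> payoff (residual y x (prev_avg hs t)) (sample z (fs t))"
    using opt \<open>f \<in> F\<close> oracleF_obj_le_iff[of z "\<lambda>i. y i - prev_avg hs t (x i)"]
    by (simp add: residual_def)
  then show ?thesis
    unfolding sum_payoff_eq_card_mult_payoff_mean[where I = "{1..t-1}"] mean[symmetric]
    by (intro mult_left_mono) auto
qed

lemma norm_sample_le:
  fixes z :: "'n::finite \<Rightarrow> 'z"
  assumes "\<forall>c. f c \<in> {-1..1}"
  shows "norm (sample z f) \<le> sqrt (real CARD('n))"
  using norm_le_sqrt_card[of "sample z f" 1] assms by (auto simp: sample_def abs_le_iff)

lemma norm_residual_le:
  fixes y :: "'n::finite \<Rightarrow> real"
  assumes "\<forall>i. y i \<in> {-1..1}" "\<forall>a. h a \<in> {-1..1}"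
  shows "norm (residual y x h) \<le> 2 * sqrt (real CARD('n))"
proof (rule norm_le_sqrt_card, intro allI)
  fix i
  have "-1 \<le> y i" "y i \<le> 1" "-1 \<le> h (x i)" "h (x i) \<le> 1" using assms by auto
  then show "\<bar>residual y x h $ i\<bar> \<le> 2" by (simp add: residual_def)
qed

lemma oracle_run_regret:
  fixes y :: "'n::finite \<Rightarrow> real"
  assumes F_range: "\<forall>f\<in>F. \<forall>c. f c \<in> {-1..1}"
    and y_range: "\<forall>i. y i \<in> {-1..1}"
    and hs_range: "\<forall>t\<in>{1..T}. \<forall>a. hs t a \<in> {-1..1}"
    and T_pos: "T \<ge> 1"
    and f_oracle: "\<forall>t\<in>{1..T}. fs t \<in> F \<and>
        (\<forall>f\<in>F. oracleF_obj z (\<lambda>i. (y i - prev_avg hs t (x i)) / 2) (fs t)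
               \<le> oracleF_obj z (\<lambda>i. (y i - prev_avg hs t (x i)) / 2) f)"
    and convex: "convex (sample z ` F)" and "u \<in> F"
  shows "(\<Sum>t=1..T. payoff (residual y x (hs t)) (sample z u))
    \<le> (\<Sum>t=1..T. payoff (residual y x (hs t)) (sample z (fs t)))
      + 8 * real CARD('n) * (ln (real T) + 1)"
proof -
  let ?d = "\<lambda>t. residual y x (hs t)" and ?a = "\<lambda>t. sample z (fs t)"
  have "\<forall>w\<in>sample z ` F. norm w \<le> sqrt (real CARD('n))"
    using F_range by (auto intro: norm_sample_le)
  moreover have "\<forall>t\<in>{1..T}. norm (?d t) \<le> 2 * sqrt (real CARD('n))"
    using y_range hs_range by (auto intro: norm_residual_le)
  moreover have "\<forall>t\<in>{1..T}. ?a t \<in> sample z ` F" using f_oracle by auto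
  moreover have "\<forall>t\<in>{2..T}. \<forall>w\<in>sample z ` F.
      (\<Sum>\<tau>=1..t-1. payoff (?d \<tau>) w) \<le> (\<Sum>\<tau>=1..t-1. payoff (?d \<tau>) (?a t))"
  proof (intro ballI)
    fix t w assume t: "t \<in> {2..T}" and "w \<in> sample z ` F"
    then obtain f where "f \<in> F" and w: "w = sample z f" by auto
    have "\<forall>f\<in>F. oracleF_obj z (\<lambda>i. (y i - prev_avg hs t (x i)) / 2) (fs t)
        \<le> oracleF_obj z (\<lambda>i. (y i - prev_avg hs t (x i)) / 2) f"
      using f_oracle t by auto
    from oracleF_is_leader[where t = t and fs = fs and hs = hs, OF _ this \<open>f \<in> F\<close>]
    show "(\<Sum>\<tau>=1..t-1. payoff (?d \<tau>) w) \<le> (\<Sum>\<tau>=1..t-1. payoff (?d \<tau>) (?a t))"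
      using t unfolding w by simp
  qed
  ultimately have "(\<Sum>t=1..T. payoff (?d t) (sample z u))
      \<le> (\<Sum>t=1..T. payoff (?d t) (?a t)) + 8 * (sqrt (real CARD('n)))\<^sup>2 * (ln (real T) + 1)"
    by (rule follow_the_leader_regret[OF convex T_pos imageI[OF \<open>u \<in> F\<close>]])
  then show ?thesis by simp
qed

lemma ensemble_payoff_le:
  fixes y :: "'n::finite \<Rightarrow> real"
  assumes F_range: "\<forall>f\<in>F. \<forall>c. f c \<in> {-1..1}"
    and y_range: "\<forall>i. y i \<in> {-1..1}"
    and hs_range: "\<forall>t\<in>{1..T}. \<forall>a. hs t a \<in> {-1..1}"
    and T_pos: "T \<ge> 1"
    and f_oracle: "\<forall>t\<in>{1..T}. fs t \<in> F \<and>
        (\<forall>f\<in>F. oracleF_obj z (\<lambda>i. (y i - prev_avg hs t (x i)) / 2) (fs t)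
               \<le> oracleF_obj z (\<lambda>i. (y i - prev_avg hs t (x i)) / 2) f)"
    and h_oracle: "\<forall>t\<in>{1..T}. hs t \<in> H \<and>
        (\<forall>h\<in>H. oracleH_obj x (\<lambda>i. fs t (z i) > 0) (\<lambda>i. \<bar>fs t (z i)\<bar>) h
               \<le> oracleH_obj x (\<lambda>i. fs t (z i) > 0) (\<lambda>i. \<bar>fs t (z i)\<bar>) (hs t))"
    and convex: "convex (sample z ` F)" and "u \<in> F" and "h \<in> H"
  shows "\<exists>f\<in>F. payoff (residual y x (\<lambda>a. (1 / real T) * (\<Sum>t=1..T. hs t a))) (sample z u)
    \<le> payoff (residual y x h) (sample z f) + 8 * real CARD('n) * (ln (real T) + 1) / real T"
proof -
  have "(\<Sum>t=1..T. (1 / real T) *\<^sub>R sample z (fs t)) \<in> sample z ` F"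
    using T_pos f_oracle by (intro convex_sum[OF _ convex]) auto
  then obtain f where "f \<in> F"
    and f: "sample z f = (1 / real (card {1..T})) *\<^sub>R (\<Sum>t=1..T. sample z (fs t))"
    by (auto simp: scaleR_sum_right)
  have "\<forall>t\<in>{1..T}. payoff (residual y x (hs t)) (sample z (fs t))
      \<le> payoff (residual y x h) (sample z (fs t))"
    using h_oracle \<open>h \<in> H\<close> oracleH_obj_le_iff by blast
  from payoff_mean_le_of_regret[OF _ _ oracle_run_regret[OF assms(1-5) convex \<open>u \<in> F\<close>] this]
  have "payoff (residual y x (\<lambda>a. (1 / real T) * (\<Sum>t=1..T. hs t a))) (sample z u)
      \<le> payoff (residual y x h) (sample z f) + 8 * real CARD('n) * (ln (real T) + 1) / real T"
    using T_pos by (simp add: f residual_mean[of "{1..T}", simplified])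
  then show ?thesis using \<open>f \<in> F\<close> by blast
qed

lemma SUP_le_INF_SUP_plus:
  fixes L :: "'h \<Rightarrow> 'f \<Rightarrow> real"
  assumes "F \<noteq> {}" "H \<noteq> {}" "\<forall>h\<in>H. bdd_above (L h ` F)"
    and close: "\<forall>u\<in>F. \<forall>h\<in>H. \<exists>f\<in>F. L h\<^sub>0 u \<le> L h f + e"
  shows "(SUP u\<in>F. L h\<^sub>0 u) \<le> (INF h\<in>H. SUP f\<in>F. L h f) + e"
proof (rule cSUP_least[OF \<open>F \<noteq> {}\<close>])
  fix u assume "u \<in> F"
  have "L h\<^sub>0 u - e \<le> (INF h\<in>H. SUP f\<in>F. L h f)"
  proof (rule cINF_greatest[OF \<open>H \<noteq> {}\<close>])
    fix h assume "h \<in> H"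
    then obtain f where "f \<in> F" "L h\<^sub>0 u \<le> L h f + e" using close \<open>u \<in> F\<close> by blast
    moreover have "L h f \<le> (SUP f\<in>F. L h f)"
      using \<open>f \<in> F\<close> \<open>h \<in> H\<close> assms(3) by (intro cSUP_upper) auto
    ultimately show "L h\<^sub>0 u - e \<le> (SUP f\<in>F. L h f)" by linarith
  qed
  then show "L h\<^sub>0 u \<le> (INF h\<in>H. SUP f\<in>F. L h f) + e" by linarith
qed

theorem theorem3:
  fixes H :: "('x \<Rightarrow> real) set" and F :: "('z \<Rightarrow> real) set"
    and y :: "'n::finite \<Rightarrow> real" and x :: "'n \<Rightarrow> 'x" and z :: "'n \<Rightarrow> 'z"
    and T :: nat and hs :: "nat \<Rightarrow> 'x \<Rightarrow> real" and fs :: "nat \<Rightarrow> 'z \<Rightarrow> real"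
  assumes H_range: "\<forall>h\<in>H. \<forall>a. h a \<in> {-1..1}"
    and F_range: "\<forall>f\<in>F. \<forall>c. f c \<in> {-1..1}"
    and y_range: "\<forall>i. y i \<in> {-1..1}"
    and T_pos: "T \<ge> 1"
    and f_oracle: "\<forall>t\<in>{1..T}. fs t \<in> F \<and>
        (\<forall>f\<in>F. oracleF_obj z (\<lambda>i. (y i - prev_avg hs t (x i)) / 2) (fs t)
               \<le> oracleF_obj z (\<lambda>i. (y i - prev_avg hs t (x i)) / 2) f)"
    and h_oracle: "\<forall>t\<in>{1..T}. hs t \<in> H \<and>
        (\<forall>h\<in>H. oracleH_obj x (\<lambda>i. fs t (z i) > 0) (\<lambda>i. \<bar>fs t (z i)\<bar>) h
               \<le> oracleH_obj x (\<lambda>i. fs t (z i) > 0) (\<lambda>i. \<bar>fs t (z i)\<bar>) (hs t))"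
    and A_convex: "convex {(\<chi> i. f (z i)) :: real ^ 'n | f. f \<in> F}"
  shows "(SUP f\<in>F. Psi_n y x z (\<lambda>a. (1 / real T) * (\<Sum>t=1..T. hs t a)) f - norm2n_sq z f)
         \<le> (INF h\<in>H. SUP f\<in>F. Psi_n y x z h f - norm2n_sq z f)
            + 8 * (ln (real T) + 1) / real T"
proof -
  let ?L = "\<lambda>h f. Psi_n y x z h f - norm2n_sq z f"
  have "{(\<chi> i. f (z i)) :: real ^ 'n | f. f \<in> F} = sample z ` F"
    by (auto simp: sample_def)
  then have convex: "convex (sample z ` F)" using A_convex by simp
  have hs_range: "\<forall>t\<in>{1..T}. \<forall>a. hs t a \<in> {-1..1}" using H_range h_oracle by blast
  have "\<exists>f\<in>F. ?L (\<lambda>a. (1 / real T) * (\<Sum>t=1..T. hs t a)) u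
      \<le> ?L h f + 8 * (ln (real T) + 1) / real T"
    if "u \<in> F" "h \<in> H" for u h
    using ensemble_payoff_le[OF F_range y_range hs_range T_pos f_oracle h_oracle convex that]
    by (simp add: Psi_n_minus_norm2n_sq field_simps)
  moreover have "bdd_above (?L h ` F)" for h
  proof (rule bdd_aboveI2)
    fix f
    show "?L h f \<le> (norm (residual y x h))\<^sup>2 / 4 / real CARD('n)"
      unfolding Psi_n_minus_norm2n_sq by (intro divide_right_mono payoff_le_norm_sq) simp
  qed
  moreover have "F \<noteq> {}" "H \<noteq> {}" using f_oracle h_oracle T_pos by auto
  ultimately show ?thesis by (intro SUP_le_INF_SUP_plus[where L = ?L]) auto
qed

end
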